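(* Let $d,k\ge1$, let $\pi(a|s)$ be a policy on actions $a\in\{0,\dots,k-1\}$ and states $s\in\{1,\dots,d\}$, and let $M=(M^a)_a$ be nonnegative $d\times d$ matrices with $\sum_{s'}M^a_{ss'}=\pi(a|s)$ for all $a,s$ and with $M^+:=\sum_aM^a$ entrywise strictly positive. Define the linear map $A'$ on $\Delta\in\mathbb{R}^{d\times d}$ by $$A'(\Delta)=\Big(\big(L_a(\Delta)\big)_{a},\ \big(\textstyle\sum_{s'}M^a_{ss'}\Delta_{ss'}\big)_{a,s}\Big),$$ where $$L_a(\Delta)=(M^aM^+)\odot\big[M^+(M^+\odot\Delta)+(M^+\odot\Delta)M^+\big]-\big[(M^a\odot\Delta)M^+ + M^a(M^+\odot\Delta)\big]\odot (M^+)^2 .$$ If $A'$ has full rank $d^2$ (i.e. $A'(\Delta)=0$ implies $\Delta=0$), then there exists $\varepsilon>0$ such that every family $W=(W^a)_a$ of nonnegative $d\times d$ matrices with $\sum_{s'}W^a_{ss'}=\pi(a|s)$ for all $a,s$, with $W^+:=\sum_aW^a$ entrywise strictly positive, with $\max_{a,s,s'}|W^a_{ss'}-M^a_{ss'}|<\varepsilon$, and satisfying $$M^a\oslash M^+=W^a\oslash W^+\quad\text{and}\quad M^aM^+\oslash(M^+)^2=W^aW^+\oslash(W^+)^2\qquad\text{for all } a,$$ is equal to $M$.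
   Context: $\odot$ and $\oslash$ denote entrywise multiplication and division of matrices; juxtaposition and $(M^+)^2=M^+M^+$ denote ordinary matrix products. $M^a_{ss'}$ represents $\pi(a|s)p(s'|s,a)$; the two displayed equations say that $W$ and $M$ have the same one-step inverse model $p(a|s,s')$ and the same two-step first-action inverse model $p(a|s,s'')$. $L_a(\Delta)$ is the part linear in $\Delta$ of $M^aM^+\odot(W^+)^2-W^aW^+\odot(M^+)^2$ when $W^a=M^a\odot(1+\Delta)$. *)

theory Defs
  imports Complex_Main
begin

type_synonym 's mat = "'s \<Rightarrow> 's \<Rightarrow> real"

definition mmul :: "('s::finite) mat \<Rightarrow> 's mat \<Rightarrow> 's mat" where
  "mmul A B = (\<lambda>s s''. \<Sum>s'\<in>UNIV. A s s' * B s' s'')"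

definition hmul :: "'s mat \<Rightarrow> 's mat \<Rightarrow> 's mat" where
  "hmul A B = (\<lambda>s s'. A s s' * B s s')"

definition hdiv :: "'s mat \<Rightarrow> 's mat \<Rightarrow> 's mat" where
  "hdiv A B = (\<lambda>s s'. A s s' / B s s')"

definition madd :: "'s mat \<Rightarrow> 's mat \<Rightarrow> 's mat" where
  "madd A B = (\<lambda>s s'. A s s' + B s s')"

definition msub :: "'s mat \<Rightarrow> 's mat \<Rightarrow> 's mat" where
  "msub A B = (\<lambda>s s'. A s s' - B s s')"

definition mplus :: "('a::finite \<Rightarrow> 's mat) \<Rightarrow> 's mat" where
  "mplus M = (\<lambda>s s'. \<Sum>a\<in>UNIV. M a s s')"

definition Lmap :: "('a::finite \<Rightarrow> ('s::finite) mat) \<Rightarrow> 'a \<Rightarrow> 's mat \<Rightarrow> 's mat" where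
  "Lmap M a D =
     msub (hmul (mmul (M a) (mplus M))
                (madd (mmul (mplus M) (hmul (mplus M) D)) (mmul (hmul (mplus M) D) (mplus M))))
          (hmul (madd (mmul (hmul (M a) D) (mplus M)) (mmul (M a) (hmul (mplus M) D)))
                (mmul (mplus M) (mplus M)))"

definition Aprime_zero :: "('a::finite \<Rightarrow> ('s::finite) mat) \<Rightarrow> 's mat \<Rightarrow> bool" where
  "Aprime_zero M D \<longleftrightarrow>
     (\<forall>a. Lmap M a D = (\<lambda>_ _. 0)) \<and> (\<forall>a s. (\<Sum>s'\<in>UNIV. M a s s' * D s s') = 0)"

definition admissible :: "('a::finite \<Rightarrow> 's::finite \<Rightarrow> real) \<Rightarrow> ('a \<Rightarrow> 's mat) \<Rightarrow> bool" where
  "admissible pol M \<longleftrightarrow>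
     (\<forall>a s s'. 0 \<le> M a s s') \<and> (\<forall>a s. (\<Sum>s'\<in>UNIV. M a s s') = pol a s)
     \<and> (\<forall>s s'. 0 < mplus M s s')"

definition is_policy :: "('a::finite \<Rightarrow> 's \<Rightarrow> real) \<Rightarrow> bool" where
  "is_policy pol \<longleftrightarrow> (\<forall>a s. 0 \<le> pol a s) \<and> (\<forall>s. (\<Sum>a\<in>UNIV. pol a s) = 1)"

end

(*
  The one-step condition forces W\<^sup>a = M\<^sup>a \<odot> (1 + \<Delta>) with \<Delta> = W\<^sup>+ \<oslash> M\<^sup>+ - 1.
  Substituting this, the two-step condition reads L\<^sub>a(\<Delta>) + Q\<^sub>a(\<Delta>) = 0 with Q\<^sub>a
  quadratic in \<Delta>, and equal row sums give \<Sum>_s' M^a_ss' \<Delta>_ss' = 0; so A'(\<Delta>) = (-Q(\<Delta>), 0) = O(|\<Delta>|\<^sup>2).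
  An injective linear map on a finite-dimensional space is bounded below, B |\<Delta>| \<le> |A'(\<Delta>)|,
  hence \<Delta> = 0 as soon as |\<Delta>| is small, which is the case when W is close to M.
*)
theory Submission
  imports Defs "HOL-Analysis.Analysis"
begin

lemma linear_inj_quadratic_perturbation_isolated:
  fixes f :: "'v::real_normed_vector \<Rightarrow> 'w::euclidean_space"
  assumes "linear f" and "\<And>x. f x = 0 \<Longrightarrow> x = 0"
    and g_bound: "\<And>x. norm (g x) \<le> K * (norm x)\<^sup>2"
  obtains \<delta> where "\<delta> > 0" and "\<And>x. norm x < \<delta> \<Longrightarrow> f x = g x \<Longrightarrow> x = 0"
proof -
  have "inj f"
    using assms(1,2) linear_inj_iff_eq_0 by blast
  then obtain B where "B > 0" and f_below: "\<And>x. B * norm x \<le> norm (f x)"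
    using linear_inj_bounded_below_pos[OF assms(1)] by blast
  show thesis
  proof
    show "0 < B / (\<bar>K\<bar> + 1)"
      using \<open>B > 0\<close> by simp
  next
    fix x assume small: "norm x < B / (\<bar>K\<bar> + 1)" and "f x = g x"
    show "x = 0"
    proof (rule ccontr)
      assume "x \<noteq> 0"
      then have "norm x > 0" by simp
      have "B * norm x \<le> K * norm x * norm x"
        using f_below[of x] g_bound[of x] \<open>f x = g x\<close> by (simp add: power2_eq_square mult.assoc)
      then have "B \<le> K * norm x"
        using \<open>norm x > 0\<close> by simp
      also have "\<dots> \<le> (\<bar>K\<bar> + 1) * norm x"
        using \<open>norm x > 0\<close> by (intro mult_right_mono) auto
      finally show False
        using small by (simp add: field_simps add_pos_nonneg)
    qed
  qed
qed

text \<open>The part of \<open>M\<^sup>a M\<^sup>+ \<odot> (W\<^sup>+)\<^sup>2 - W\<^sup>a W\<^sup>+ \<odot> (M\<^sup>+)\<^sup>2\<close> quadratic in \<open>\<Delta>\<close>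
  when \<open>W\<^sup>a = M\<^sup>a \<odot> (1 + \<Delta>)\<close>; Lmap is the linear part.\<close>

definition Qmap :: "('a::finite \<Rightarrow> ('s::finite) mat) \<Rightarrow> 'a \<Rightarrow> 's mat \<Rightarrow> 's mat" where
  "Qmap M a D = (\<lambda>s u.
      mmul (M a) (mplus M) s u * (\<Sum>t\<in>UNIV. mplus M s t * D s t * (mplus M t u * D t u))
    - (\<Sum>t\<in>UNIV. M a s t * D s t * (mplus M t u * D t u)) * mmul (mplus M) (mplus M) s u)"

lemma mplus_perturbation:
  assumes "\<And>a s t. W a s t = M a s t * (1 + D s t)"
  shows "mplus W s t = mplus M s t * (1 + D s t)"
  unfolding mplus_def assms by (simp add: sum_distrib_right)

lemma two_step_defect_expansion:
  fixes M :: "'a::finite \<Rightarrow> ('s::finite) mat"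
  assumes "\<And>a s t. W a s t = M a s t * (1 + D s t)"
  shows "mmul (M a) (mplus M) s u * mmul (mplus W) (mplus W) s u
           - mmul (W a) (mplus W) s u * mmul (mplus M) (mplus M) s u
         = Lmap M a D s u + Qmap M a D s u"
  unfolding Lmap_def Qmap_def msub_def hmul_def madd_def mmul_def mplus_perturbation[OF assms] assms
  by (simp add: algebra_simps sum.distrib sum_subtractf)

lemma Lmap_add: "Lmap M a (\<lambda>s t. D s t + D' s t) = (\<lambda>s t. Lmap M a D s t + Lmap M a D' s t)"
  unfolding Lmap_def msub_def hmul_def madd_def mmul_def
  by (auto simp: algebra_simps sum.distrib)

lemma Lmap_scale: "Lmap M a (\<lambda>s t. c * D s t) = (\<lambda>s t. c * Lmap M a D s t)"
  unfolding Lmap_def msub_def hmul_def madd_def mmul_def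
  by (auto simp: algebra_simps sum_distrib_left)

definition Aprime ::
    "('a::finite \<Rightarrow> ('s::finite) mat) \<Rightarrow> real^('s \<times> 's) \<Rightarrow> (real^('a \<times> 's \<times> 's)) \<times> (real^('a \<times> 's))"
  where
  "Aprime M x =
     (vec_lambda (\<lambda>(a, s, u). Lmap M a (\<lambda>s t. x $ (s, t)) s u),
      vec_lambda (\<lambda>(a, s). \<Sum>t\<in>UNIV. M a s t * x $ (s, t)))"

lemma linear_Aprime: "linear (Aprime (M :: 'a::finite \<Rightarrow> ('s::finite) mat))"
proof (rule linearI)
  fix x y :: "real^('s::finite \<times> 's)" and c :: real
  show "Aprime M (x + y) = Aprime M x + Aprime M y"
    by (simp add: Aprime_def vec_eq_iff algebra_simps sum.distrib Lmap_add split: prod.split)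
  show "Aprime M (c *\<^sub>R x) = c *\<^sub>R Aprime M x"
    by (simp add: Aprime_def vec_eq_iff algebra_simps sum_distrib_left Lmap_scale split: prod.split)
qed

lemma Aprime_eq_0_iff: "Aprime M x = 0 \<longleftrightarrow> Aprime_zero M (\<lambda>s t. x $ (s, t))"
  by (auto simp: Aprime_def Aprime_zero_def vec_eq_iff fun_eq_iff zero_prod_def)

lemma abs_sum_quadratic_le:
  fixes D :: "'s::finite \<Rightarrow> 's \<Rightarrow> real"
  assumes "\<And>t. 0 \<le> c t" and "\<And>t. 0 \<le> e t" and D_le: "\<And>s t. \<bar>D s t\<bar> \<le> n"
  shows "\<bar>\<Sum>t\<in>UNIV. c t * D s t * (e t * D t u)\<bar> \<le> (\<Sum>t\<in>UNIV. c t * e t) * n\<^sup>2"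
proof -
  have "\<bar>\<Sum>t\<in>UNIV. c t * D s t * (e t * D t u)\<bar> \<le> (\<Sum>t\<in>UNIV. \<bar>c t * D s t * (e t * D t u)\<bar>)"
    by (rule sum_abs)
  also have "\<dots> \<le> (\<Sum>t\<in>UNIV. c t * e t * n\<^sup>2)"
  proof (rule sum_mono)
    fix t
    have "\<bar>D s t\<bar> * \<bar>D t u\<bar> \<le> n * n"
      using D_le by (intro mult_mono) (auto intro: order_trans[OF abs_ge_zero D_le])
    then have "c t * e t * (\<bar>D s t\<bar> * \<bar>D t u\<bar>) \<le> c t * e t * (n * n)"
      using assms(1,2) by (intro mult_left_mono) auto
    then show "\<bar>c t * D s t * (e t * D t u)\<bar> \<le> c t * e t * n\<^sup>2"
      using assms(1,2)[of t] by (simp add: abs_mult power2_eq_square mult_ac)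
  qed
  also have "\<dots> = (\<Sum>t\<in>UNIV. c t * e t) * n\<^sup>2"
    by (simp add: sum_distrib_right)
  finally show ?thesis .
qed

lemma abs_Qmap_le:
  fixes M :: "'a::finite \<Rightarrow> ('s::finite) mat"
  assumes M_nonneg: "\<And>a s t. 0 \<le> M a s t" and D_le: "\<And>s t. \<bar>D s t\<bar> \<le> n"
  shows "\<bar>Qmap M a D s u\<bar> \<le> 2 * mmul (M a) (mplus M) s u * mmul (mplus M) (mplus M) s u * n\<^sup>2"
proof -
  have Mp: "0 \<le> mplus M s t" for s t
    unfolding mplus_def using M_nonneg by (simp add: sum_nonneg)
  have "0 \<le> mmul (M a) (mplus M) s u" and "0 \<le> mmul (mplus M) (mplus M) s u"
    unfolding mmul_def using M_nonneg Mp by (simp_all add: sum_nonneg)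
  moreover have "\<bar>\<Sum>t\<in>UNIV. mplus M s t * D s t * (mplus M t u * D t u)\<bar> \<le> mmul (mplus M) (mplus M) s u * n\<^sup>2"
    unfolding mmul_def by (rule abs_sum_quadratic_le[OF Mp Mp D_le])
  moreover have "\<bar>\<Sum>t\<in>UNIV. M a s t * D s t * (mplus M t u * D t u)\<bar> \<le> mmul (M a) (mplus M) s u * n\<^sup>2"
    unfolding mmul_def by (rule abs_sum_quadratic_le[OF M_nonneg Mp D_le])
  ultimately have "\<bar>Qmap M a D s u\<bar>
      \<le> mmul (M a) (mplus M) s u * (mmul (mplus M) (mplus M) s u * n\<^sup>2)
       + (mmul (M a) (mplus M) s u * n\<^sup>2) * mmul (mplus M) (mplus M) s u"
    unfolding Qmap_def
    by (intro order_trans[OF abs_triangle_ineq4] add_mono) (simp_all add: abs_mult mult_left_mono mult_right_mono)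
  then show ?thesis
    by (simp add: algebra_simps)
qed

lemma norm_Qmap_le:
  fixes M :: "'a::finite \<Rightarrow> ('s::finite) mat" and x :: "real^('s \<times> 's)"
  assumes M_nonneg: "\<And>a s t. 0 \<le> M a s t"
  shows "norm (vec_lambda (\<lambda>(a, s, u). Qmap M a (\<lambda>s t. x $ (s, t)) s u) :: real^('a \<times> 's \<times> 's))
    \<le> (\<Sum>(a, s, u)\<in>UNIV. 2 * mmul (M a) (mplus M) s u * mmul (mplus M) (mplus M) s u) * (norm x)\<^sup>2"
proof -
  have "norm (vec_lambda (\<lambda>(a, s, u). Qmap M a (\<lambda>s t. x $ (s, t)) s u) :: real^('a \<times> 's \<times> 's))
      \<le> (\<Sum>(a, s, u)\<in>UNIV. \<bar>Qmap M a (\<lambda>s t. x $ (s, t)) s u\<bar>)"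
    by (rule order_trans[OF norm_le_l1_cart]) (simp add: case_prod_beta)
  also have "\<dots> \<le> (\<Sum>(a, s, u)\<in>UNIV. 2 * mmul (M a) (mplus M) s u * mmul (mplus M) (mplus M) s u * (norm x)\<^sup>2)"
    by (intro sum_mono) (auto intro: abs_Qmap_le[OF M_nonneg] component_le_norm_cart)
  finally show ?thesis
    by (simp add: sum_distrib_right case_prod_beta)
qed

lemma Aprime_eq_quadratic_isolated:
  fixes M :: "'a::finite \<Rightarrow> ('s::finite) mat"
  assumes M_nonneg: "\<And>a s t. 0 \<le> M a s t" and A_inj: "\<forall>D. Aprime_zero M D \<longrightarrow> D = (\<lambda>_ _. 0)"
  obtains \<delta> where "\<delta> > 0" and "\<And>x. norm x < \<delta>
    \<Longrightarrow> Aprime M x = (- vec_lambda (\<lambda>(a, s, u). Qmap M a (\<lambda>s t. x $ (s, t)) s u), 0) \<Longrightarrow> x = 0"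
proof -
  have inj: "x = 0" if "Aprime M x = 0" for x
    using A_inj that by (auto simp: Aprime_eq_0_iff fun_eq_iff vec_eq_iff)
  have bound: "norm (- vec_lambda (\<lambda>(a, s, u). Qmap M a (\<lambda>s t. x $ (s, t)) s u), 0 :: real^('a \<times> 's))
      \<le> (\<Sum>(a, s, u)\<in>UNIV. 2 * mmul (M a) (mplus M) s u * mmul (mplus M) (mplus M) s u) * (norm x)\<^sup>2"
    for x :: "real^('s \<times> 's)"
    using norm_Qmap_le[of M, OF M_nonneg] by (simp add: norm_prod_def)
  show thesis
    using linear_inj_quadratic_perturbation_isolated[OF linear_Aprime inj bound] that by blast
qed

lemma small_quadratic_perturbation_eq_0:
  fixes M :: "'a::finite \<Rightarrow> ('s::finite) mat"
  assumes "\<And>a s t. 0 \<le> M a s t" and "\<forall>D. Aprime_zero M D \<longrightarrow> D = (\<lambda>_ _. 0)"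
  obtains \<delta> where "\<delta> > 0" and
    "\<And>D. \<forall>s t. \<bar>D s t\<bar> < \<delta> \<Longrightarrow> \<forall>a s u. Lmap M a D s u + Qmap M a D s u = 0
      \<Longrightarrow> \<forall>a s. (\<Sum>t\<in>UNIV. M a s t * D s t) = 0 \<Longrightarrow> D = (\<lambda>_ _. 0)"
proof -
  obtain \<delta> where "\<delta> > 0" and isolated: "\<And>x. norm x < \<delta>
    \<Longrightarrow> Aprime M x = (- vec_lambda (\<lambda>(a, s, u). Qmap M a (\<lambda>s t. x $ (s, t)) s u), 0) \<Longrightarrow> x = 0"
    using Aprime_eq_quadratic_isolated[OF assms] by blast
  show thesis
  proof
    show "0 < \<delta> / CARD('s \<times> 's)"
      using \<open>\<delta> > 0\<close> by simp
  next
    fix D assume D_small: "\<forall>s t. \<bar>D s t\<bar> < \<delta> / CARD('s \<times> 's)"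
      and L_Q: "\<forall>a s u. Lmap M a D s u + Qmap M a D s u = 0"
      and row: "\<forall>a s. (\<Sum>t\<in>UNIV. M a s t * D s t) = 0"
    define x :: "real^('s \<times> 's)" where "x = vec_lambda (\<lambda>(s, t). D s t)"
    have D_eq: "(\<lambda>s t. x $ (s, t)) = D"
      by (simp add: x_def)
    have "norm x \<le> (\<Sum>p\<in>UNIV. \<bar>x $ p\<bar>)"
      by (rule norm_le_l1_cart)
    also have "\<dots> < (\<Sum>p\<in>(UNIV :: ('s \<times> 's) set). \<delta> / CARD('s \<times> 's))"
      using D_small by (intro sum_strict_mono) (auto simp: x_def)
    also have "\<dots> = \<delta>"
      by simp
    finally have "norm x < \<delta>" .
    moreover have "Aprime M x = (- vec_lambda (\<lambda>(a, s, u). Qmap M a (\<lambda>s t. x $ (s, t)) s u), 0)"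
      using L_Q row
      by (simp add: Aprime_def D_eq vec_eq_iff eq_neg_iff_add_eq_0 x_def split: prod.split)
    ultimately have "x = 0"
      by (rule isolated)
    then show "D = (\<lambda>_ _. 0)"
      using D_eq by auto
  qed
qed

lemma hdiv_mplus_eq_imp_proportional:
  assumes "0 < mplus M s t" and "0 < mplus W s t" and "hdiv (M a) (mplus M) = hdiv (W a) (mplus W)"
  shows "W a s t = M a s t * (mplus W s t / mplus M s t)"
proof -
  have "M a s t / mplus M s t = W a s t / mplus W s t"
    using fun_cong[OF fun_cong[OF assms(3)], of s t] by (simp add: hdiv_def)
  with assms(1,2) show ?thesis
    by (simp add: field_simps)
qed

lemma two_step_model_eq_imp_Lmap_add_Qmap_eq_0:
  fixes M :: "'a::finite \<Rightarrow> ('s::finite) mat"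
  assumes M_pos: "\<And>s t. 0 < mplus M s t" and W_pos: "\<And>s t. 0 < mplus W s t"
    and W_eq: "\<And>a s t. W a s t = M a s t * (1 + D s t)"
    and "hdiv (mmul (M a) (mplus M)) (mmul (mplus M) (mplus M))
           = hdiv (mmul (W a) (mplus W)) (mmul (mplus W) (mplus W))"
  shows "Lmap M a D s u + Qmap M a D s u = 0"
proof -
  have "0 < mmul (mplus M) (mplus M) s u" and "0 < mmul (mplus W) (mplus W) s u"
    unfolding mmul_def using M_pos W_pos by (simp_all add: sum_pos)
  moreover have "mmul (M a) (mplus M) s u / mmul (mplus M) (mplus M) s u
      = mmul (W a) (mplus W) s u / mmul (mplus W) (mplus W) s u"
    using fun_cong[OF fun_cong[OF assms(4)], of s u] by (simp add: hdiv_def)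
  ultimately have "mmul (M a) (mplus M) s u * mmul (mplus W) (mplus W) s u
      - mmul (W a) (mplus W) s u * mmul (mplus M) (mplus M) s u = 0"
    by (simp add: field_simps)
  moreover have "mmul (M a) (mplus M) s u * mmul (mplus W) (mplus W) s u
      - mmul (W a) (mplus W) s u * mmul (mplus M) (mplus M) s u = Lmap M a D s u + Qmap M a D s u"
    using W_eq by (rule two_step_defect_expansion)
  ultimately show ?thesis
    by simp
qed

lemma abs_mplus_ratio_minus_1_le:
  fixes M W :: "'a::finite \<Rightarrow> ('s::finite) mat" and e :: real
  assumes M_pos: "\<And>s t. 0 < mplus M s t" and close: "\<And>a. \<bar>W a s t - M a s t\<bar> \<le> e"
  shows "\<bar>mplus W s t / mplus M s t - 1\<bar> \<le> CARD('a) * e * (\<Sum>(s, t)\<in>UNIV. 1 / mplus M s t)"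
proof -
  have "\<bar>mplus W s t - mplus M s t\<bar> = \<bar>\<Sum>a\<in>UNIV. W a s t - M a s t\<bar>"
    by (simp add: mplus_def sum_subtractf)
  also have "\<dots> \<le> (\<Sum>a\<in>UNIV. \<bar>W a s t - M a s t\<bar>)"
    by (rule sum_abs)
  also have "\<dots> \<le> (\<Sum>a\<in>(UNIV :: 'a set). e)"
    using close by (rule sum_mono)
  also have "\<dots> = CARD('a) * e"
    by simp
  finally have num: "\<bar>mplus W s t - mplus M s t\<bar> \<le> CARD('a) * e" .
  have den: "1 / mplus M s t \<le> (\<Sum>(s, t)\<in>UNIV. 1 / mplus M s t)"
    using member_le_sum[of "(s, t)" UNIV "\<lambda>(s, t). 1 / mplus M s t"] M_pos
    by (simp add: less_imp_le split: prod.split)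
  have "\<bar>mplus W s t / mplus M s t - 1\<bar> = \<bar>mplus W s t - mplus M s t\<bar> * (1 / mplus M s t)"
    using M_pos[of s t] by (simp add: field_simps abs_div)
  also have "\<dots> \<le> CARD('a) * e * (\<Sum>(s, t)\<in>UNIV. 1 / mplus M s t)"
    using num den M_pos[of s t] by (intro mult_mono) auto
  finally show ?thesis .
qed

lemma mplus_ratio_near_1:
  fixes M :: "'a::finite \<Rightarrow> ('s::finite) mat"
  assumes M_pos: "\<And>s t. 0 < mplus M s t" and "\<delta> > 0"
  obtains \<epsilon> where "\<epsilon> > 0"
    and "\<And>W s t. \<forall>a s t. \<bar>W a s t - M a s t\<bar> < \<epsilon> \<Longrightarrow> \<bar>mplus W s t / mplus M s t - 1\<bar> < \<delta>"
proof
  define C where "C = CARD('a) * (\<Sum>(s, t)\<in>UNIV. 1 / mplus M s t)"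
  have "C \<ge> 0"
    unfolding C_def using M_pos by (intro mult_nonneg_nonneg sum_nonneg) (auto simp: less_imp_le)
  then show "\<delta> / (C + 1) > 0"
    using \<open>\<delta> > 0\<close> by simp
  fix W :: "'a \<Rightarrow> 's \<Rightarrow> 's \<Rightarrow> real" and s t
  assume "\<forall>a s t. \<bar>W a s t - M a s t\<bar> < \<delta> / (C + 1)"
  then have "\<bar>mplus W s t / mplus M s t - 1\<bar> \<le> CARD('a) * (\<delta> / (C + 1)) * (\<Sum>(s, t)\<in>UNIV. 1 / mplus M s t)"
    by (intro abs_mplus_ratio_minus_1_le M_pos) (simp add: less_imp_le)
  also have "\<dots> = C * (\<delta> / (C + 1))"
    by (simp add: C_def)
  also have "\<dots> < \<delta>"
    using \<open>\<delta> > 0\<close> \<open>C \<ge> 0\<close> by (simp add: field_simps)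
  finally show "\<bar>mplus W s t / mplus M s t - 1\<bar> < \<delta>" .
qed

lemma equal_inverse_models_imp_perturbation_equations:
  fixes M W :: "'a::finite \<Rightarrow> ('s::finite) mat"
  assumes "admissible pol M" and "admissible pol W"
    and one_step: "\<forall>a. hdiv (M a) (mplus M) = hdiv (W a) (mplus W)"
    and two_step: "\<forall>a. hdiv (mmul (M a) (mplus M)) (mmul (mplus M) (mplus M))
                        = hdiv (mmul (W a) (mplus W)) (mmul (mplus W) (mplus W))"
  defines "D \<equiv> \<lambda>s t. mplus W s t / mplus M s t - 1"
  shows "\<forall>a s t. W a s t = M a s t * (1 + D s t)"
    and "\<forall>a s u. Lmap M a D s u + Qmap M a D s u = 0"
    and "\<forall>a s. (\<Sum>t\<in>UNIV. M a s t * D s t) = 0"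
proof -
  have M_pos: "\<And>s t. 0 < mplus M s t" and W_pos: "\<And>s t. 0 < mplus W s t"
    using assms(1,2) by (auto simp: admissible_def)
  have W_eq: "W a s t = M a s t * (1 + D s t)" for a s t
    using hdiv_mplus_eq_imp_proportional[OF M_pos W_pos] one_step by (simp add: D_def)
  then show "\<forall>a s t. W a s t = M a s t * (1 + D s t)"
    by blast
  show "\<forall>a s u. Lmap M a D s u + Qmap M a D s u = 0"
    using two_step_model_eq_imp_Lmap_add_Qmap_eq_0[OF M_pos W_pos W_eq] two_step by blast
  have "(\<Sum>t\<in>UNIV. M a s t * D s t) = (\<Sum>t\<in>UNIV. W a s t) - (\<Sum>t\<in>UNIV. M a s t)" for a s
    by (simp add: W_eq algebra_simps sum.distrib)
  with assms(1,2) show "\<forall>a s. (\<Sum>t\<in>UNIV. M a s t * D s t) = 0"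
    by (simp add: admissible_def)
qed

theorem proposition3:
  fixes pol :: "'a::finite \<Rightarrow> 's::finite \<Rightarrow> real"
    and M :: "'a \<Rightarrow> 's \<Rightarrow> 's \<Rightarrow> real"
  assumes "is_policy pol"
    and "admissible pol M"
    and "\<forall>D. Aprime_zero M D \<longrightarrow> D = (\<lambda>_ _. 0)"
  shows "\<exists>\<epsilon>>0. \<forall>W :: 'a \<Rightarrow> 's \<Rightarrow> 's \<Rightarrow> real.
           admissible pol W
           \<and> (\<forall>a s s'. \<bar>W a s s' - M a s s'\<bar> < \<epsilon>)
           \<and> (\<forall>a. hdiv (M a) (mplus M) = hdiv (W a) (mplus W))
           \<and> (\<forall>a. hdiv (mmul (M a) (mplus M)) (mmul (mplus M) (mplus M))
                 = hdiv (mmul (W a) (mplus W)) (mmul (mplus W) (mplus W)))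
           \<longrightarrow> W = M"
proof -
  from assms(2) have M_nonneg: "\<And>a s t. 0 \<le> M a s t" and M_pos: "\<And>s t. 0 < mplus M s t"
    by (auto simp: admissible_def)
  obtain \<delta> where "\<delta> > 0" and isolated: "\<And>D. \<forall>s t. \<bar>D s t\<bar> < \<delta>
      \<Longrightarrow> \<forall>a s u. Lmap M a D s u + Qmap M a D s u = 0 \<Longrightarrow> \<forall>a s. (\<Sum>t\<in>UNIV. M a s t * D s t) = 0
      \<Longrightarrow> D = (\<lambda>_ _. 0)"
    using small_quadratic_perturbation_eq_0[OF M_nonneg assms(3)] by blast
  obtain \<epsilon> where "\<epsilon> > 0" and near: "\<And>W s t. \<forall>a s t. \<bar>W a s t - M a s t\<bar> < \<epsilon>
      \<Longrightarrow> \<bar>mplus W s t / mplus M s t - 1\<bar> < \<delta>"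
    using mplus_ratio_near_1[OF M_pos \<open>\<delta> > 0\<close>] by blast
  have "W = M" if W: "admissible pol W" "\<forall>a s s'. \<bar>W a s s' - M a s s'\<bar> < \<epsilon>"
    "\<forall>a. hdiv (M a) (mplus M) = hdiv (W a) (mplus W)"
    "\<forall>a. hdiv (mmul (M a) (mplus M)) (mmul (mplus M) (mplus M))
       = hdiv (mmul (W a) (mplus W)) (mmul (mplus W) (mplus W))" for W
  proof -
    define D where "D = (\<lambda>s t. mplus W s t / mplus M s t - 1)"
    have W_eq: "\<forall>a s t. W a s t = M a s t * (1 + D s t)"
      and "\<forall>a s u. Lmap M a D s u + Qmap M a D s u = 0"
      and "\<forall>a s. (\<Sum>t\<in>UNIV. M a s t * D s t) = 0"
      using equal_inverse_models_imp_perturbation_equations[OF assms(2) W(1,3,4)] unfolding D_def by blast+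
    moreover have "\<forall>s t. \<bar>D s t\<bar> < \<delta>"
      using near[OF W(2)] by (simp add: D_def)
    ultimately have "D = (\<lambda>_ _. 0)"
      by (intro isolated)
    with W_eq show "W = M"
      by (simp add: fun_eq_iff)
  qed
  with \<open>\<epsilon> > 0\<close> show ?thesis
    by blast
qed

end
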